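(* Let $k\ge2$ and let $\tau_k$ be the random $k$-bonacci substitution on the alphabet $\{a_1,\ldots,a_k\}$. Then the RS-subshift $X_{\tau_k}$ is semi-mixing with respect to the set of words $\mathcal{S}_{\tau_k}=\{a_1a_i,\ a_ia_1\mid 1\le i\le k\}$.
   Context: The random $k$-bonacci substitution is $\tau_k\colon a_i\mapsto\{a_1a_{i+1},a_{i+1}a_1\}$ for $1\le i\le k-1$, and $a_k\mapsto\{a_1\}$ (for $k=2$ this is the random Fibonacci substitution, for $k=3$ the random tribonacci substitution). A random substitution $\vartheta$ is extended to words by set concatenation; a word is $\vartheta$-legal if it is a subword of some word in $\vartheta^j(x)$ for some $j\ge0$ and letter $x$. The RS-subshift $X_\vartheta$ is the set of bi-infinite sequences all of whose finite subwords are $\vartheta$-legal, with the left shift; $\mathcal{L}$ is its language and $\mathcal{L}^\ell$ the admitted words of length $\ell$. A subshift is semi-mixing with respect to $\mathcal{S}\subsetneq\mathcal{L}^\ell$ if for every $w\in\mathcal{L}$ there is $N$ such that for every $n\ge N$ there exist a word $u$ of length $n$ and $s\in\mathcal{S}$ with $wus\in\mathcal{L}$. *)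

theory Defs
  imports Main "HOL-Library.Sublist"
begin

text \<open>Letters are natural numbers; the letter a_i is represented by i, alphabet {1..k}.
A random substitution is a map from letters to sets of words.\<close>

type_synonym rsubst = "nat \<Rightarrow> nat list set"

definition kbonacci :: "nat \<Rightarrow> rsubst" where
  "kbonacci k i = (if 1 \<le> i \<and> i \<le> k - 1 then {[1, i+1], [i+1, 1]}
                   else if i = k then {[1]} else {})"

fun subst_word :: "rsubst \<Rightarrow> nat list \<Rightarrow> nat list set" where
  "subst_word \<sigma> [] = {[]}"
| "subst_word \<sigma> (a # w) = {u @ v | u v. u \<in> \<sigma> a \<and> v \<in> subst_word \<sigma> w}"

definition subst_set :: "rsubst \<Rightarrow> nat list set \<Rightarrow> nat list set" where
  "subst_set \<sigma> W = (\<Union>w\<in>W. subst_word \<sigma> w)"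

definition legal :: "rsubst \<Rightarrow> nat set \<Rightarrow> nat list \<Rightarrow> bool" where
  "legal \<sigma> A v \<longleftrightarrow> (\<exists>j. \<exists>x\<in>A. \<exists>u\<in>(subst_set \<sigma> ^^ j) {[x]}. sublist v u)"

definition window :: "(int \<Rightarrow> nat) \<Rightarrow> int \<Rightarrow> nat \<Rightarrow> nat list" where
  "window x i n = map (\<lambda>j. x (i + int j)) [0..<n]"

definition RS_subshift :: "rsubst \<Rightarrow> nat set \<Rightarrow> (int \<Rightarrow> nat) set" where
  "RS_subshift \<sigma> A = {x. \<forall>i n. legal \<sigma> A (window x i n)}"

definition language :: "(int \<Rightarrow> nat) set \<Rightarrow> nat list set" where
  "language X = {w. \<exists>x\<in>X. \<exists>i. w = window x i (length w)}"

definition semi_mixing :: "(int \<Rightarrow> nat) set \<Rightarrow> nat \<Rightarrow> nat list set \<Rightarrow> bool" where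
  "semi_mixing X l S \<longleftrightarrow>
     S \<subset> {w \<in> language X. length w = l} \<and>
     (\<forall>w\<in>language X. \<exists>N. \<forall>n\<ge>N. \<exists>u s. length u = n \<and> s \<in> S \<and> w @ u @ s \<in> language X)"

definition S_kbonacci :: "nat \<Rightarrow> nat list set" where
  "S_kbonacci k = {[1, i] | i. 1 \<le> i \<and> i \<le> k} \<union> {[i, 1] | i. 1 \<le> i \<and> i \<le> k}"

end

theory Submission
  imports Defs
begin

text \<open>Fixing the choice \<open>a\<^sub>1 \<mapsto> a\<^sub>1a\<^sub>2\<close> or \<open>a\<^sub>1 \<mapsto> a\<^sub>2a\<^sub>1\<close> gives two morphisms realising
  \<open>\<tau>\<^sub>k\<close>; their iterates on \<open>a\<^sub>1\<close> grow to the right and to the left respectively.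
  Wrapping a word \<open>u \<in> \<tau>\<^sub>k\<^sup>J(a\<^sub>1)\<close> between such iterates yields a two-sided nested chain of
  legal words, hence a point of the subshift, so legal words and admitted words coincide.
  Every legal word \<open>w\<close> lies in some such \<open>u\<close>, and \<open>u\<close> can be continued inside \<open>\<tau>\<^sub>k\<^sup>J\<^sup>+\<^sup>m(a\<^sub>1)\<close>
  by the \<open>J\<close>-th image of the right-growing tail. That continuation is an image under the
  right-growing morphism, whose blocks are \<open>a\<^sub>1\<close> or \<open>a\<^sub>1a\<^sub>i\<close>, so any two consecutive letters
  contain \<open>a\<^sub>1\<close> and therefore form a word of \<open>S\<close>, at every distance from \<open>w\<close>.\<close>

lemma subst_word_append:
  "subst_word \<sigma> (xs @ ys) = {a @ b | a b. a \<in> subst_word \<sigma> xs \<and> b \<in> subst_word \<sigma> ys}"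
  by (induction xs) (auto, metis append.assoc, fastforce)

lemma subst_word_appendI:
  "a \<in> subst_word \<sigma> xs \<Longrightarrow> b \<in> subst_word \<sigma> ys \<Longrightarrow> a @ b \<in> subst_word \<sigma> (xs @ ys)"
  by (auto simp: subst_word_append)

lemma subst_set_iff: "u \<in> subst_set \<sigma> W \<longleftrightarrow> (\<exists>w\<in>W. u \<in> subst_word \<sigma> w)"
  by (simp add: subst_set_def)

lemma subst_iter_Suc_iff:
  "u \<in> (subst_set \<sigma> ^^ Suc n) W \<longleftrightarrow> (\<exists>w\<in>(subst_set \<sigma> ^^ n) W. u \<in> subst_word \<sigma> w)"
  by (simp add: subst_set_iff)

lemma subst_iter_mono: "V \<subseteq> W \<Longrightarrow> (subst_set \<sigma> ^^ n) V \<subseteq> (subst_set \<sigma> ^^ n) W"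
  by (induction n) (auto simp: subst_set_def)

lemma subst_iter_append:
  "a \<in> (subst_set \<sigma> ^^ n) {x} \<Longrightarrow> b \<in> (subst_set \<sigma> ^^ n) {y} \<Longrightarrow>
   a @ b \<in> (subst_set \<sigma> ^^ n) {x @ y}"
proof (induction n arbitrary: a b)
  case (Suc n)
  then obtain a' b' where "a' \<in> (subst_set \<sigma> ^^ n) {x}" "a \<in> subst_word \<sigma> a'"
    and "b' \<in> (subst_set \<sigma> ^^ n) {y}" "b \<in> subst_word \<sigma> b'"
    unfolding subst_iter_Suc_iff by blast
  with Suc.IH show ?case
    unfolding subst_iter_Suc_iff by (blast intro: subst_word_appendI)
qed simp

lemma subst_iter_trans:
  assumes "u \<in> (subst_set \<sigma> ^^ n) {v}" "v \<in> (subst_set \<sigma> ^^ j) {w}"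
  shows "u \<in> (subst_set \<sigma> ^^ (n + j)) {w}"
proof -
  have "(subst_set \<sigma> ^^ n) {v} \<subseteq> (subst_set \<sigma> ^^ n) ((subst_set \<sigma> ^^ j) {w})"
    using assms(2) by (intro subst_iter_mono) simp
  with assms(1) show ?thesis
    by (auto simp: funpow_add)
qed

definition rsubst_on :: "rsubst \<Rightarrow> nat set \<Rightarrow> bool" where
  "rsubst_on \<sigma> A \<longleftrightarrow> (\<forall>a\<in>A. \<sigma> a \<noteq> {} \<and> (\<forall>v\<in>\<sigma> a. set v \<subseteq> A))"

lemma subst_word_alphabet:
  assumes "rsubst_on \<sigma> A"
  shows "set w \<subseteq> A \<Longrightarrow> v \<in> subst_word \<sigma> w \<Longrightarrow> set v \<subseteq> A"
proof (induction w arbitrary: v)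
  case (Cons a w)
  then obtain x y where "v = x @ y" "x \<in> \<sigma> a" "y \<in> subst_word \<sigma> w" by auto
  moreover have "set x \<subseteq> A" using assms Cons.prems(1) \<open>x \<in> \<sigma> a\<close> unfolding rsubst_on_def by auto
  ultimately show ?case using Cons by simp
qed simp

lemma subst_iter_alphabet:
  assumes "rsubst_on \<sigma> A" "set w \<subseteq> A"
  shows "u \<in> (subst_set \<sigma> ^^ n) {w} \<Longrightarrow> set u \<subseteq> A"
proof (induction n arbitrary: u)
  case (Suc n)
  then obtain v where "v \<in> (subst_set \<sigma> ^^ n) {w}" "u \<in> subst_word \<sigma> v"
    unfolding subst_iter_Suc_iff by blast
  with Suc.IH show ?case using subst_word_alphabet[OF assms(1)] by blast
qed (use assms(2) in simp)

lemma subst_word_nonempty: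
  assumes "rsubst_on \<sigma> A"
  shows "set w \<subseteq> A \<Longrightarrow> subst_word \<sigma> w \<noteq> {}"
proof (induction w)
  case (Cons a w)
  then obtain x y where "x \<in> \<sigma> a" "y \<in> subst_word \<sigma> w" using assms by (fastforce simp: rsubst_on_def)
  then show ?case by auto
qed simp

lemma subst_iter_nonempty:
  assumes "rsubst_on \<sigma> A" "set w \<subseteq> A"
  shows "(subst_set \<sigma> ^^ n) {w} \<noteq> {}"
proof (induction n)
  case (Suc n)
  then obtain v where v: "v \<in> (subst_set \<sigma> ^^ n) {w}" by blast
  then have "set v \<subseteq> A" using subst_iter_alphabet[OF assms] by blast
  then obtain u where "u \<in> subst_word \<sigma> v" using subst_word_nonempty[OF assms(1)] by blast
  with v have "u \<in> (subst_set \<sigma> ^^ Suc n) {w}" unfolding subst_iter_Suc_iff by blast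
  then show ?case by blast
qed simp

lemma subst_iter_sublist:
  assumes "rsubst_on \<sigma> A" "sublist x y" "set y \<subseteq> A" "u \<in> (subst_set \<sigma> ^^ n) {x}"
  shows "\<exists>u'\<in>(subst_set \<sigma> ^^ n) {y}. sublist u u'"
proof -
  obtain p s where y: "y = p @ x @ s" using assms(2) by (auto simp: sublist_def)
  obtain p' s' where "p' \<in> (subst_set \<sigma> ^^ n) {p}" "s' \<in> (subst_set \<sigma> ^^ n) {s}"
    using subst_iter_nonempty[OF assms(1), of p n] subst_iter_nonempty[OF assms(1), of s n]
      assms(3) y by auto
  then have "p' @ u @ s' \<in> (subst_set \<sigma> ^^ n) {y}"
    unfolding y by (intro subst_iter_append assms(4))
  then show ?thesis by blast
qed

lemma legal_sublist: "legal \<sigma> A v \<Longrightarrow> sublist w v \<Longrightarrow> legal \<sigma> A w"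
  unfolding legal_def by (meson sublist_order.order_trans)

lemma legal_subst_iter_letter:
  "x \<in> A \<Longrightarrow> u \<in> (subst_set \<sigma> ^^ n) {[x]} \<Longrightarrow> legal \<sigma> A u"
  unfolding legal_def by blast

lemma legal_letter_image: "x \<in> A \<Longrightarrow> v \<in> \<sigma> x \<Longrightarrow> legal \<sigma> A v"
  by (rule legal_subst_iter_letter[where n = 1]) (auto simp: subst_set_def)

lemma legal_subst_iter:
  assumes "rsubst_on \<sigma> A" "legal \<sigma> A v" "u \<in> (subst_set \<sigma> ^^ n) {v}"
  shows "legal \<sigma> A u"
proof -
  obtain j x w where x: "x \<in> A" and w: "w \<in> (subst_set \<sigma> ^^ j) {[x]}" "sublist v w"
    using assms(2) by (auto simp: legal_def)
  have "set w \<subseteq> A" using subst_iter_alphabet[OF assms(1) _ w(1)] x by simp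
  then obtain u' where "u' \<in> (subst_set \<sigma> ^^ n) {w}" "sublist u u'"
    using subst_iter_sublist[OF assms(1) w(2) _ assms(3)] by blast
  with subst_iter_trans[OF _ w(1)] x show ?thesis
    unfolding legal_def by blast
qed

lemma legal_alphabet:
  assumes "rsubst_on \<sigma> A" "legal \<sigma> A v"
  shows "set v \<subseteq> A"
proof -
  obtain j x w where "x \<in> A" "w \<in> (subst_set \<sigma> ^^ j) {[x]}" "sublist v w"
    using assms(2) by (auto simp: legal_def)
  then show ?thesis
    using subst_iter_alphabet[OF assms(1), of "[x]"] set_mono_sublist by fastforce
qed

definition word_hom :: "(nat \<Rightarrow> nat list) \<Rightarrow> nat list \<Rightarrow> nat list" where
  "word_hom g xs = concat (map g xs)"

lemma word_hom_simps [simp]: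
  "word_hom g [] = []" "word_hom g (a # xs) = g a @ word_hom g xs"
  "word_hom g (xs @ ys) = word_hom g xs @ word_hom g ys"
  by (simp_all add: word_hom_def)

lemma set_word_hom: "set (word_hom g w) = (\<Union>a\<in>set w. set (g a))"
  by (auto simp: word_hom_def)

lemma word_hom_iter_append:
  "(word_hom g ^^ n) (xs @ ys) = (word_hom g ^^ n) xs @ (word_hom g ^^ n) ys"
  by (induction n) auto

lemma length_word_hom_iter:
  assumes "\<And>a. g a \<noteq> []"
  shows "length xs \<le> length ((word_hom g ^^ n) xs)"
proof -
  have "length xs \<le> length (word_hom g xs)" for xs
  proof (induction xs)
    case (Cons a xs)
    then show ?case using assms[of a] by (cases "g a") auto
  qed simp
  then show ?thesis by (induction n) (auto intro: order.trans)
qed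

lemma word_hom_in_subst_word:
  "(\<And>a. a \<in> set v \<Longrightarrow> g a \<in> \<sigma> a) \<Longrightarrow> word_hom g v \<in> subst_word \<sigma> v"
proof (induction v)
  case (Cons a v)
  then have "g a \<in> \<sigma> a" "word_hom g v \<in> subst_word \<sigma> v" by simp_all
  then show ?case by auto
qed simp

lemma word_hom_iter_in_subst_iter:
  assumes "rsubst_on \<sigma> A" "\<And>a. a \<in> A \<Longrightarrow> g a \<in> \<sigma> a" "set w \<subseteq> A"
  shows "(word_hom g ^^ n) w \<in> (subst_set \<sigma> ^^ n) {w}"
proof (induction n)
  case (Suc n)
  have "set ((word_hom g ^^ n) w) \<subseteq> A"
    using Suc subst_iter_alphabet[OF assms(1,3)] by blast
  then have "(word_hom g ^^ Suc n) w \<in> subst_word \<sigma> ((word_hom g ^^ n) w)"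
    using assms(2) by (auto intro: word_hom_in_subst_word)
  with Suc show ?case
    unfolding subst_iter_Suc_iff by blast
qed simp

lemma language_sublist:
  assumes "w \<in> language X" "sublist v w"
  shows "v \<in> language X"
proof -
  obtain x i where x: "x \<in> X" "w = window x i (length w)"
    using assms(1) by (auto simp: language_def)
  obtain p s where w: "w = p @ v @ s" using assms(2) by (auto simp: sublist_def)
  have "v = window x (i + int (length p)) (length v)"
  proof (rule nth_equalityI)
    fix t assume t: "t < length v"
    have "v ! t = w ! (length p + t)" using t unfolding w by (simp add: nth_append)
    also have "\<dots> = x (i + int (length p + t))"
      using t x(2) arg_cong[OF x(2), of "\<lambda>l. l ! (length p + t)"] w
      by (simp add: window_def)
    finally show "v ! t = window x (i + int (length p)) (length v) ! t"
      using t by (simp add: window_def add.assoc)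
  qed (simp add: window_def)
  with x(1) show ?thesis unfolding language_def by blast
qed

lemma legal_of_language: "w \<in> language (RS_subshift \<sigma> A) \<Longrightarrow> legal \<sigma> A w"
  unfolding language_def RS_subshift_def by auto metis

lemma nested_chain_trans:
  fixes W :: "nat \<Rightarrow> 'a list" and c :: "nat \<Rightarrow> nat"
  assumes nest: "\<And>m. \<exists>L R. W (Suc m) = L @ W m @ R \<and> c (Suc m) = length L + c m"
    and "m \<le> M"
  shows "\<exists>L R. W M = L @ W m @ R \<and> c M = length L + c m"
  using assms(2)
proof (induction M rule: dec_induct)
  case (step M)
  then obtain L R where "W M = L @ W m @ R" "c M = length L + c m" by blast
  moreover obtain L' R' where "W (Suc M) = L' @ W M @ R'" "c (Suc M) = length L' + c M"
    using nest by blast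
  ultimately have "W (Suc M) = (L' @ L) @ W m @ (R @ R') \<and> c (Suc M) = length (L' @ L) + c m"
    by simp
  then show ?case by blast
qed (intro exI[of _ "[]"]; simp)

lemma nested_chain_nth:
  fixes W :: "nat \<Rightarrow> 'a list" and c :: "nat \<Rightarrow> nat"
  assumes nest: "\<And>m. \<exists>L R. W (Suc m) = L @ W m @ R \<and> c (Suc m) = length L + c m"
    and "m \<le> M" "0 \<le> int (c m) + i" "int (c m) + i < int (length (W m))"
  shows "W M ! nat (int (c M) + i) = W m ! nat (int (c m) + i)"
proof -
  obtain L R where LR: "W M = L @ W m @ R" "c M = length L + c m"
    using nested_chain_trans[of W c, OF nest assms(2)] by blast
  have "nat (int (c M) + i) = length L + nat (int (c m) + i)" using LR(2) assms(3) by linarith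
  moreover have "nat (int (c m) + i) < length (W m)" using assms(3,4) by linarith
  ultimately show ?thesis using LR(1) by (simp add: nth_append)
qed

text \<open>The point reads position \<open>i\<close> off any word \<open>W m\<close> with \<open>m > \<bar>i\<bar>\<close>, centred at \<open>c m\<close>;
  the growth conditions make this well defined.\<close>
lemma nested_legal_words_in_language:
  fixes W :: "nat \<Rightarrow> nat list" and c :: "nat \<Rightarrow> nat"
  assumes nest: "\<And>m. \<exists>L R. W (Suc m) = L @ W m @ R \<and> c (Suc m) = length L + c m"
    and left: "\<And>m. m \<le> c m" and right: "\<And>m. c m + m \<le> length (W m)"
    and legal: "\<And>m. legal \<sigma> A (W m)"
  shows "W 0 \<in> language (RS_subshift \<sigma> A)"
proof -
  define x where "x i = W (nat \<bar>i\<bar> + 1) ! nat (int (c (nat \<bar>i\<bar> + 1)) + i)" for i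
  have window: "window x i n = take n (drop (nat (int (c M) + i)) (W M))"
    if M: "nat \<bar>i\<bar> + n < M" for i n M
  proof (rule nth_equalityI)
    have bounds: "0 \<le> int (c M) + i" "int (c M) + i + int n \<le> int (length (W M))"
      using left[of M] right[of M] M by linarith+
    then show "length (window x i n) = length (take n (drop (nat (int (c M) + i)) (W M)))"
      by (simp add: window_def)
    fix t assume "t < length (window x i n)"
    then have t: "t < n" by (simp add: window_def)
    define m where "m = nat \<bar>i + int t\<bar> + 1"
    have "W M ! nat (int (c M) + (i + int t)) = W m ! nat (int (c m) + (i + int t))"
      using M t left[of m] right[of m] unfolding m_def
      by (intro nested_chain_nth[of W c, OF nest]) linarith+
    also have "\<dots> = x (i + int t)"
      unfolding x_def m_def ..
    moreover have "nat (int (c M) + (i + int t)) = nat (int (c M) + i) + t" using bounds by linarith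
    ultimately show "window x i n ! t = take n (drop (nat (int (c M) + i)) (W M)) ! t"
      using t bounds by (simp add: window_def)
  qed
  have "x \<in> RS_subshift \<sigma> A"
    unfolding RS_subshift_def
  proof (intro CollectI allI)
    fix i n
    have "sublist (take n (drop (nat (int (c (nat \<bar>i\<bar> + n + 1)) + i)) (W (nat \<bar>i\<bar> + n + 1))))
                  (W (nat \<bar>i\<bar> + n + 1))"
      by (meson sublist_drop sublist_order.order_trans sublist_take)
    then show "legal \<sigma> A (window x i n)"
      using window[of i n "nat \<bar>i\<bar> + n + 1"] legal_sublist[OF legal] by simp
  qed
  moreover have "window x (- int (c 0)) (length (W 0)) = W 0"
  proof -
    define M where "M = c 0 + length (W 0) + 1"
    obtain L R where LR: "W M = L @ W 0 @ R" "c M = length L + c 0"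
      using nested_chain_trans[of W c, OF nest, of 0 M] by auto
    have "nat (int (c M) + - int (c 0)) = length L" using LR(2) by simp
    then show ?thesis using window[of "- int (c 0)" "length (W 0)" M] LR(1)
      unfolding M_def by simp
  qed
  ultimately show ?thesis unfolding language_def by (metis (mono_tags) mem_Collect_eq)
qed

lemma successively_nth:
  "successively P xs \<Longrightarrow> Suc d < length xs \<Longrightarrow> P (xs ! d) (xs ! Suc d)"
proof (induction xs arbitrary: d)
  case (Cons x xs)
  then show ?case by (cases d) (auto simp: successively_Cons hd_conv_nth)
qed simp

context
  fixes k :: nat
  assumes two_le_k: "2 \<le> k"
begin

definition kb_right :: "nat \<Rightarrow> nat list" where
  "kb_right i = (if i < k then [1, Suc i] else [1])"

definition kb_left :: "nat \<Rightarrow> nat list" where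
  "kb_left i = (if i = 1 then [2, 1] else kb_right i)"

lemma kb_right_nonempty: "kb_right i \<noteq> []"
  by (simp add: kb_right_def)

lemma kb_left_nonempty: "kb_left i \<noteq> []"
  by (simp add: kb_left_def kb_right_nonempty)

lemma rsubst_on_kbonacci: "rsubst_on (kbonacci k) {1..k}"
  using two_le_k by (auto simp: rsubst_on_def kbonacci_def)

lemma kb_right_iter_in_subst_iter:
  "set w \<subseteq> {1..k} \<Longrightarrow> (word_hom kb_right ^^ n) w \<in> (subst_set (kbonacci k) ^^ n) {w}"
  by (rule word_hom_iter_in_subst_iter[OF rsubst_on_kbonacci])
    (auto simp: kb_right_def kbonacci_def)

lemma kb_left_iter_in_subst_iter:
  "set w \<subseteq> {1..k} \<Longrightarrow> (word_hom kb_left ^^ n) w \<in> (subst_set (kbonacci k) ^^ n) {w}"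
  using two_le_k
  by (intro word_hom_iter_in_subst_iter[OF rsubst_on_kbonacci])
    (auto simp: kb_left_def kb_right_def kbonacci_def)

primrec right_tail :: "nat \<Rightarrow> nat list" where
  "right_tail 0 = []"
| "right_tail (Suc m) = right_tail m @ (word_hom kb_right ^^ m) [2]"

lemma kb_right_iter_one: "(word_hom kb_right ^^ m) [1] = 1 # right_tail m"
proof (induction m)
  case (Suc m)
  have "(word_hom kb_right ^^ Suc m) [1] = (word_hom kb_right ^^ m) (word_hom kb_right [1])"
    by (simp only: funpow_Suc_right comp_def)
  also have "word_hom kb_right [1] = [1] @ [2]"
    using two_le_k by (simp add: kb_right_def)
  also have "(word_hom kb_right ^^ m) ([1] @ [2]) =
      (word_hom kb_right ^^ m) [1] @ (word_hom kb_right ^^ m) [2]"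
    by (rule word_hom_iter_append)
  finally show ?case by (simp only: Suc.IH right_tail.simps append_Cons)
qed simp

lemma kb_left_iter_one_Suc:
  "(word_hom kb_left ^^ Suc m) [1] = (word_hom kb_left ^^ m) [2] @ (word_hom kb_left ^^ m) [1]"
proof -
  have "(word_hom kb_left ^^ Suc m) [1] = (word_hom kb_left ^^ m) ([2] @ [1])"
    by (simp only: funpow_Suc_right comp_def) (simp add: kb_left_def)
  then show ?thesis by (simp only: word_hom_iter_append)
qed

lemma length_right_tail: "m \<le> length (right_tail m)"
proof (induction m)
  case (Suc m)
  then show ?case
    using length_word_hom_iter[of kb_right "[2]" m] kb_right_nonempty by simp
qed simp

lemma length_kb_left_iter_one: "Suc m \<le> length ((word_hom kb_left ^^ m) [1])"
proof (induction m)
  case (Suc m)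
  then show ?case
    using length_word_hom_iter[of kb_left "[2]" m] kb_left_nonempty
    unfolding kb_left_iter_one_Suc by simp
qed simp

lemma right_tail_alphabet: "set (right_tail m) \<subseteq> {1..k}"
  using subst_iter_alphabet[OF rsubst_on_kbonacci _ kb_right_iter_in_subst_iter[of "[1]" m]]
    two_le_k unfolding kb_right_iter_one by simp

lemma legal_one_one: "legal (kbonacci k) {1..k} [1, 1]"
proof -
  have "legal (kbonacci k) {1..k} [k, 1]"
    using two_le_k by (intro legal_letter_image[of "k - 1"]) (auto simp: kbonacci_def)
  moreover have "[1, 1, 2] \<in> (subst_set (kbonacci k) ^^ 1) {[k, 1]}"
    using two_le_k by (auto simp: subst_set_def kbonacci_def)
  ultimately have "legal (kbonacci k) {1..k} [1, 1, 2]"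
    by (rule legal_subst_iter[OF rsubst_on_kbonacci])
  then show ?thesis
    by (rule legal_sublist) (simp add: sublist_def exI[of _ "[]"])
qed

lemma legal_pair_with_one:
  assumes "i \<in> {1..k}"
  shows "legal (kbonacci k) {1..k} [1, i]" "legal (kbonacci k) {1..k} [i, 1]"
proof -
  have "legal (kbonacci k) {1..k} [1, i] \<and> legal (kbonacci k) {1..k} [i, 1]"
  proof (cases "i = 1")
    case False
    with assms have "i - 1 \<in> {1..k}" "[1, i] \<in> kbonacci k (i - 1)" "[i, 1] \<in> kbonacci k (i - 1)"
      by (auto simp: kbonacci_def)
    then show ?thesis by (auto intro: legal_letter_image)
  qed (use legal_one_one in simp)
  then show "legal (kbonacci k) {1..k} [1, i]" "legal (kbonacci k) {1..k} [i, 1]" by simp_all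
qed

lemma legal_two_two: "legal (kbonacci k) {1..k} [2, 2]"
proof -
  have "[1, 2] @ [2, 1] \<in> subst_word (kbonacci k) ([1] @ [1])"
    using two_le_k by (intro subst_word_appendI) (auto simp: kbonacci_def)
  then have "[1, 2, 2, 1] \<in> (subst_set (kbonacci k) ^^ 1) {[1, 1]}"
    by (simp add: subst_set_def)
  with legal_one_one have "legal (kbonacci k) {1..k} [1, 2, 2, 1]"
    by (rule legal_subst_iter[OF rsubst_on_kbonacci])
  then show ?thesis
    by (rule legal_sublist) (simp add: sublist_def exI[of _ "[1]"])
qed

text \<open>\<open>W m\<close> is a \<open>J\<close>-th image of \<open>kb_left\<^sup>m(a\<^sub>1) kb_right\<^sup>m(a\<^sub>1) = kb_left\<^sup>m(a\<^sub>1) a\<^sub>1 right_tail m\<close>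
  in which the middle \<open>a\<^sub>1\<close> is mapped to \<open>u\<close>; \<open>c m\<close> is the position of \<open>u\<close> in \<open>W m\<close>.\<close>
lemma subst_iter_one_in_language:
  assumes u: "u \<in> (subst_set (kbonacci k) ^^ J) {[1]}"
  shows "u \<in> language (RS_subshift (kbonacci k) {1..k})"
proof -
  let ?L = "word_hom kb_left" and ?R = "word_hom kb_right"
  define W where "W m = (?L ^^ J) ((?L ^^ m) [1]) @ u @ (?R ^^ J) (right_tail m)" for m
  define c where "c m = length ((?L ^^ J) ((?L ^^ m) [1]))" for m
  have "\<exists>A B. W (Suc m) = A @ W m @ B \<and> c (Suc m) = length A + c m" for m
  proof -
    have "W (Suc m) = (?L ^^ J) ((?L ^^ m) [2]) @ W m @ (?R ^^ J) ((?R ^^ m) [2])"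
      unfolding W_def kb_left_iter_one_Suc by (simp add: word_hom_iter_append)
    moreover have "c (Suc m) = length ((?L ^^ J) ((?L ^^ m) [2])) + c m"
      unfolding c_def kb_left_iter_one_Suc by (simp add: word_hom_iter_append)
    ultimately show ?thesis by blast
  qed
  moreover have "m \<le> c m" for m
    using length_word_hom_iter[of kb_left "(?L ^^ m) [1]" J] length_kb_left_iter_one[of m]
      kb_left_nonempty unfolding c_def by fastforce
  moreover have "c m + m \<le> length (W m)" for m
    using length_word_hom_iter[of kb_right "right_tail m" J] length_right_tail[of m]
      kb_right_nonempty unfolding c_def W_def by fastforce
  moreover have "legal (kbonacci k) {1..k} (W m)" for m
  proof -
    have left_alphabet: "set ((?L ^^ m) [1]) \<subseteq> {1..k}"
      using subst_iter_alphabet[OF rsubst_on_kbonacci _ kb_left_iter_in_subst_iter[of "[1]" m]]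
        two_le_k by simp
    have "W m \<in> (subst_set (kbonacci k) ^^ J) {(?L ^^ m) [1] @ [1] @ right_tail m}"
      unfolding W_def using left_alphabet right_tail_alphabet
      by (intro subst_iter_append u kb_left_iter_in_subst_iter kb_right_iter_in_subst_iter)
    moreover have "(?L ^^ m) [1] @ (?R ^^ m) [1] \<in> (subst_set (kbonacci k) ^^ m) {[1] @ [1]}"
      using two_le_k by (intro subst_iter_append kb_left_iter_in_subst_iter kb_right_iter_in_subst_iter) simp_all
    ultimately have "W m \<in> (subst_set (kbonacci k) ^^ (J + m)) {[1] @ [1]}"
      unfolding kb_right_iter_one by (simp add: subst_iter_trans)
    then show ?thesis using legal_subst_iter[OF rsubst_on_kbonacci legal_one_one] by simp
  qed
  ultimately have "W 0 \<in> language (RS_subshift (kbonacci k) {1..k})"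
    by (rule nested_legal_words_in_language)
  then show ?thesis
    by (rule language_sublist) (simp add: W_def)
qed

lemma letter_in_kb_right_iter: "n < k \<Longrightarrow> Suc n \<in> set ((word_hom kb_right ^^ n) [1])"
proof (induction n)
  case (Suc n)
  then have "Suc (Suc n) \<in> set (kb_right (Suc n))" by (simp add: kb_right_def)
  with Suc show ?case by (auto simp: set_word_hom)
qed simp

lemma legal_sublist_subst_iter_one:
  assumes "legal (kbonacci k) {1..k} v"
  shows "\<exists>J u. u \<in> (subst_set (kbonacci k) ^^ J) {[1]} \<and> sublist v u"
proof -
  obtain j a w where a: "a \<in> {1..k}"
    and w: "w \<in> (subst_set (kbonacci k) ^^ j) {[a]}" "sublist v w"
    using assms by (auto simp: legal_def)
  define y where "y = (word_hom kb_right ^^ (a - 1)) [1]"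
  have "a \<in> set y"
    using letter_in_kb_right_iter[of "a - 1"] a unfolding y_def by auto
  then have "sublist [a] y"
    by (metis in_set_conv_decomp sublist_appendI append_Cons append_Nil)
  moreover have y: "y \<in> (subst_set (kbonacci k) ^^ (a - 1)) {[1]}"
    unfolding y_def using two_le_k by (intro kb_right_iter_in_subst_iter) simp
  moreover have "set y \<subseteq> {1..k}"
    using subst_iter_alphabet[OF rsubst_on_kbonacci _ y] two_le_k by simp
  ultimately obtain u where "u \<in> (subst_set (kbonacci k) ^^ j) {y}" "sublist w u"
    using subst_iter_sublist[OF rsubst_on_kbonacci _ _ w(1)] by blast
  with y w(2) show ?thesis
    by (meson subst_iter_trans sublist_order.order_trans)
qed

lemma language_kbonacci_iff_legal:
  "w \<in> language (RS_subshift (kbonacci k) {1..k}) \<longleftrightarrow> legal (kbonacci k) {1..k} w"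
  using legal_of_language legal_sublist_subst_iter_one subst_iter_one_in_language language_sublist
  by blast

lemma successively_word_hom_kb_right:
  "successively (\<lambda>a b. a = 1 \<or> b = 1) (word_hom kb_right z)"
proof (induction z)
  case (Cons a z)
  have "word_hom kb_right z = [] \<or> hd (word_hom kb_right z) = 1"
    by (cases z) (auto simp: kb_right_def)
  moreover have "successively (\<lambda>a b. a = 1 \<or> b = 1) (kb_right a)"
    by (simp add: kb_right_def)
  ultimately show ?case
    using Cons.IH by (auto simp: successively_append_iff)
qed simp

lemma successively_kb_right_image_right_tail:
  "successively (\<lambda>a b. a = 1 \<or> b = 1) ((word_hom kb_right ^^ J) (right_tail (Suc m)))"
proof -
  have "(word_hom kb_right ^^ J) [1] @ (word_hom kb_right ^^ J) (right_tail (Suc m)) =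
      (word_hom kb_right ^^ J) ([1] @ right_tail (Suc m))"
    by (rule word_hom_iter_append[symmetric])
  also have "[1] @ right_tail (Suc m) = (word_hom kb_right ^^ Suc m) [1]"
    by (simp only: kb_right_iter_one append_Cons append_Nil)
  also have "(word_hom kb_right ^^ J) ((word_hom kb_right ^^ Suc m) [1]) =
      word_hom kb_right ((word_hom kb_right ^^ (J + m)) [1])"
    by (metis add_Suc_right comp_apply funpow.simps(2) funpow_add)
  finally show ?thesis
    using successively_word_hom_kb_right by (metis successively_append_iff)
qed

lemma subst_iter_one_extends_into_S:
  assumes u: "u \<in> (subst_set (kbonacci k) ^^ J) {[1]}"
  shows "\<exists>v s. length v = n \<and> s \<in> S_kbonacci k \<and> legal (kbonacci k) {1..k} (u @ v @ s)"
proof -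
  define m where "m = Suc (Suc n)"
  define E where "E = (word_hom kb_right ^^ J) (right_tail m)"
  have length_E: "Suc (Suc n) \<le> length E"
    using length_word_hom_iter[of kb_right "right_tail m" J] length_right_tail[of m]
      kb_right_nonempty unfolding E_def m_def by fastforce
  have "u @ E \<in> (subst_set (kbonacci k) ^^ J) {[1] @ right_tail m}"
    unfolding E_def using right_tail_alphabet
    by (intro subst_iter_append u kb_right_iter_in_subst_iter)
  moreover have "[1] @ right_tail m \<in> (subst_set (kbonacci k) ^^ m) {[1]}"
    using kb_right_iter_in_subst_iter[of "[1]" m] two_le_k unfolding kb_right_iter_one by simp
  ultimately have "u @ E \<in> (subst_set (kbonacci k) ^^ (J + m)) {[1]}"
    by (rule subst_iter_trans)
  then have legal_uE: "legal (kbonacci k) {1..k} (u @ E)"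
    using two_le_k by (intro legal_subst_iter_letter[of 1]) simp_all
  have "successively (\<lambda>a b. a = 1 \<or> b = 1) E"
    unfolding E_def m_def by (rule successively_kb_right_image_right_tail)
  then have "E ! n = 1 \<or> E ! Suc n = 1"
    using successively_nth[of _ E n] length_E by simp
  moreover have "E ! n \<in> set E" "E ! Suc n \<in> set E" "set E \<subseteq> {1..k}"
    using length_E legal_alphabet[OF rsubst_on_kbonacci legal_uE] by simp_all
  ultimately have "[E ! n, E ! Suc n] \<in> S_kbonacci k"
    unfolding S_kbonacci_def by auto
  moreover have "prefix (u @ take n E @ [E ! n, E ! Suc n]) (u @ E)"
    using length_E take_is_prefix[of "Suc (Suc n)" E] by (simp add: take_Suc_conv_app_nth)
  then have "legal (kbonacci k) {1..k} (u @ take n E @ [E ! n, E ! Suc n])"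
    using legal_uE legal_sublist prefix_imp_sublist by blast
  ultimately show ?thesis
    using length_E by (intro exI[of _ "take n E"] exI[of _ "[E ! n, E ! Suc n]"]) simp
qed

lemma legal_extends_into_S:
  assumes "legal (kbonacci k) {1..k} w"
  shows "\<exists>N. \<forall>n\<ge>N. \<exists>v s. length v = n \<and> s \<in> S_kbonacci k \<and>
           legal (kbonacci k) {1..k} (w @ v @ s)"
proof -
  obtain J u where u: "u \<in> (subst_set (kbonacci k) ^^ J) {[1]}" "sublist w u"
    using legal_sublist_subst_iter_one[OF assms] by blast
  then obtain p q where u_split: "u = p @ w @ q" by (auto simp: sublist_def)
  have "\<exists>v s. length v = n \<and> s \<in> S_kbonacci k \<and> legal (kbonacci k) {1..k} (w @ v @ s)"
    if "length q \<le> n" for n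
  proof -
    obtain v s where v: "length v = n - length q" and s: "s \<in> S_kbonacci k"
      and legal: "legal (kbonacci k) {1..k} (u @ v @ s)"
      using subst_iter_one_extends_into_S[OF u(1)] by blast
    have "u @ v @ s = p @ (w @ (q @ v) @ s) @ []" unfolding u_split by simp
    with legal have "legal (kbonacci k) {1..k} (w @ (q @ v) @ s)"
      by (metis legal_sublist sublist_appendI)
    with v s that show ?thesis by (intro exI[of _ "q @ v"] exI[of _ s]) simp
  qed
  then show ?thesis by blast
qed

end

theorem mainTheorem7:
  fixes k :: nat
  assumes "k \<ge> 2"
  shows "semi_mixing (RS_subshift (kbonacci k) {1..k}) 2 (S_kbonacci k)"
proof -
  let ?X = "RS_subshift (kbonacci k) {1..k}"
  note language_iff = language_kbonacci_iff_legal[OF assms]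
  have "S_kbonacci k \<subseteq> {w \<in> language ?X. length w = 2}"
    using legal_pair_with_one[OF assms] unfolding S_kbonacci_def language_iff by auto
  moreover have "[2, 2] \<in> {w \<in> language ?X. length w = 2} - S_kbonacci k"
    using legal_two_two[OF assms] unfolding S_kbonacci_def language_iff by auto
  moreover have "\<forall>w\<in>language ?X. \<exists>N. \<forall>n\<ge>N. \<exists>v s.
      length v = n \<and> s \<in> S_kbonacci k \<and> w @ v @ s \<in> language ?X"
    using legal_extends_into_S[OF assms] unfolding Ball_def language_iff by blast
  ultimately show ?thesis
    unfolding semi_mixing_def by blast
qed

end
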